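(* Consider an incentive-compatible design $\mathcal{D}=(\psi,\phi)$ under no interference, where each action set $\mathcal{A}_i\subseteq\mathbb{R}$ is compact and the performance function $\chi$ is continuous and one-to-one. Suppose that for every fixed action profile and every agent $i$, $\sqrt{k}(\phi_i(Y^{obs})-\chi(A_i))\xrightarrow{D}\mathcal{N}(0,\sigma^2(A_i))$ (independently across agents), where $\sigma^2:\mathcal{A}\to(0,\infty)$ satisfies $\chi(\alpha')\ge\chi(\alpha)\Rightarrow\sigma^2(\alpha')\ge\sigma^2(\alpha)$ for all agents $i$ and all $\alpha,\alpha'\in\mathcal{A}_i$. Define $$\nu(y)=\int^{y}\frac{1}{\sqrt{\sigma^2(\chi^{-1}(z))}}\,dz$$ and the design $\mathcal{D}'=(\psi,\phi')$ with $\phi'_i(Y^{obs})=\nu(\phi_i(Y^{obs}))$. If either $\nu$ is convex, or both $z\mapsto 1/\sqrt{\sigma^2(\chi^{-1}(z))}$ and $z\mapsto\sigma^2(\chi^{-1}(z))$ are convex, then $\mathcal{D}'$ is incentive-compatible and more powerful than $\mathcal{D}$; specifically, for any agents $i,j$ and actions with $\chi_i:=\chi(A_i)\ge\chi_j:=\chi(A_j)$, writing $\sigma_i^2=\sigma^2(A_i)$, $\sigma_j^2=\sigma^2(A_j)$, $$\Phi\Big(\sqrt{k/2}\,\big(\nu(\chi_i)-\nu(\chi_j)\big)\Big)\;\ge\;\Phi\Big(\sqrt{k}\,\frac{\chi_i-\chi_j}{\sqrt{\sigma_i^2+\sigma_j^2}}\Big),$$ i.e. the asymptotic probability that the better agent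 beats the other is at least as large under $\mathcal{D}'$ as under $\mathcal{D}$.
   Context: Setting: $n$ agents, $m$ units, complete randomization (assignment rule $\psi$) with $k=m/n$ units per agent; agent $i$ chooses action $A_i\in\mathcal{A}_i$; observed outcomes $Y^{obs}\in\mathbb{R}^m$; performance function $\chi:\mathcal{A}\to\mathbb{R}$; natural action $A_i^\star=\arg\max_{\alpha\in\mathcal{A}_i}\chi(\alpha)$. A design $\mathcal{D}=(\psi,\phi)$ has score $\phi:\mathbb{R}^m\to\mathbb{R}^n$ and winner $\arg\max_i\phi_i$. No interference: a unit's outcome when assigned to agent $i$ depends only on $A_i$. $\Phi$ is the standard normal CDF. Asymptotic incentive compatibility: if $\sqrt{k}(\phi(Y^{obs})-\mu(\mathbf{A}))\to\mathcal{N}(0,V(\mathbf{A}))$, the probability that agent $i$'s score exceeds agent $j$'s is approximated by $\Phi(\sqrt{k}(\mu_i-\mu_j)/(v_{ii}+v_{jj}-v_{ij}-v_{ji})^{1/2})$, and the design is incentive-compatible if for every $i$, $j\neq i$ and actions of the others, $A_i^\star$ maximizes this approximate probability over $\alpha\in\mathcal{A}_i$. A design $\mathcal{D}'$ is more powerful than $\mathcal{D}$ (both incentive-compatible) if the probability that the highest-quality agent wins at the natural action profile is at least as large under $\mathcal{D}'$ as under $\mathcal{D}$. *)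

theory Defs
  imports "HOL-Probability.Probability"
begin

definition Phi :: "real \<Rightarrow> real" where
  "Phi x = measure std_normal_distribution {..x}"

definition gauss :: "real \<Rightarrow> real measure" where
  "gauss v = (if 0 < v then density lborel (normal_density 0 (sqrt v)) else return borel 0)"

text \<open>A design is represented by the law of its score vector phi(Y^obs):
  L A k is the distribution on ('n \<Rightarrow> real) of the scores when the agents play the
  action profile A and each agent receives k units.
  Asymptotic normality: sqrt k (phi - mu A) converges in distribution to N(0, V A),
  for every admissible action profile; stated via Cramer-Wold (all linear combinations).\<close>
definition admissible :: "('n \<Rightarrow> real set) \<Rightarrow> ('n \<Rightarrow> real) \<Rightarrow> bool" where
  "admissible As A \<longleftrightarrow> (\<forall>l. A l \<in> As l)"

definition asym_normal ::
  "('n::finite \<Rightarrow> real set) \<Rightarrow> (('n \<Rightarrow> real) \<Rightarrow> nat \<Rightarrow> ('n \<Rightarrow> real) measure)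
   \<Rightarrow> (('n \<Rightarrow> real) \<Rightarrow> 'n \<Rightarrow> real) \<Rightarrow> (('n \<Rightarrow> real) \<Rightarrow> 'n \<Rightarrow> 'n \<Rightarrow> real) \<Rightarrow> bool" where
  "asym_normal As L mu V \<longleftrightarrow>
     (\<forall>A. admissible As A \<longrightarrow> (\<forall>c :: 'n \<Rightarrow> real.
        weak_conv_m (\<lambda>k. distr (L A k) borel (\<lambda>s. sqrt (real k) * (\<Sum>i\<in>UNIV. c i * (s i - mu A i))))
                    (gauss (\<Sum>i\<in>UNIV. \<Sum>j\<in>UNIV. c i * c j * V A i j))))"

text \<open>Approximate probability that agent i's score exceeds agent j's.\<close>
definition approx_win ::
  "nat \<Rightarrow> ('n \<Rightarrow> real) \<Rightarrow> ('n \<Rightarrow> 'n \<Rightarrow> real) \<Rightarrow> 'n \<Rightarrow> 'n \<Rightarrow> real" where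
  "approx_win k mu V i j =
     Phi (sqrt (real k) * (mu i - mu j) / sqrt (V i i + V j j - V i j - V j i))"

definition natural_action :: "('n \<Rightarrow> real set) \<Rightarrow> (real \<Rightarrow> real) \<Rightarrow> 'n \<Rightarrow> real \<Rightarrow> bool" where
  "natural_action As chi i a \<longleftrightarrow> a \<in> As i \<and> (\<forall>b \<in> As i. chi b \<le> chi a)"

definition design_IC ::
  "('n::finite \<Rightarrow> real set) \<Rightarrow> (real \<Rightarrow> real) \<Rightarrow> (('n \<Rightarrow> real) \<Rightarrow> nat \<Rightarrow> ('n \<Rightarrow> real) measure) \<Rightarrow> bool" where
  "design_IC As chi L \<longleftrightarrow>
     (\<exists>mu V. asym_normal As L mu V \<and>
        (\<forall>k>0. \<forall>i j. i \<noteq> j \<longrightarrow> (\<forall>A. admissible As A \<longrightarrow>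
           (\<forall>a\<^sub>0. natural_action As chi i a\<^sub>0 \<longrightarrow> (\<forall>\<alpha> \<in> As i.
              approx_win k (mu (A(i := \<alpha>))) (V (A(i := \<alpha>))) i j
                \<le> approx_win k (mu (A(i := a\<^sub>0))) (V (A(i := a\<^sub>0))) i j)))))"

definition transform_design ::
  "(real \<Rightarrow> real) \<Rightarrow> (('n \<Rightarrow> real) \<Rightarrow> nat \<Rightarrow> ('n \<Rightarrow> real) measure)
   \<Rightarrow> ('n \<Rightarrow> real) \<Rightarrow> nat \<Rightarrow> ('n \<Rightarrow> real) measure" where
  "transform_design nu L A k = distr (L A k) (Pi\<^sub>M UNIV (\<lambda>_. borel)) (\<lambda>s i. nu (s i))"

end

theory Submission
  imports Defs
begin

text \<open>By the delta method the transformed scores \<open>nu \<circ> phi\<close> are asymptotically normal with means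
  \<open>nu (chi a)\<close> and identity covariance, since \<open>nu' = 1 / sigma\<close> (as a function of performance)
  stabilises the variance. The key inequality is
  \<open>nu x - nu y \<ge> (x - y) / sqrt ((sigma2 x + sigma2 y) / 2)\<close> for \<open>y \<le> x\<close>: if \<open>nu\<close> is convex it
  follows from the tangent at \<open>y\<close> and the monotonicity of \<open>sigma2\<close>; if \<open>1 / sigma\<close> and
  \<open>sigma2\<close> are convex, from the midpoint Hermite--Hadamard bound
  \<open>nu x - nu y \<ge> (x - y) nu' ((x + y) / 2)\<close> and Jensen's inequality for \<open>sigma2\<close>. The same
  inequality makes \<open>nu \<circ> chi\<close> monotone, which gives incentive compatibility of the transformed
  design, and, \<open>Phi\<close> being monotone, it is the power comparison.\<close>

lemma Phi_mono:
  assumes "x \<le> y" shows "Phi x \<le> Phi y"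
proof -
  interpret prob_space "density lborel std_normal_density"
    by (rule prob_space_normal_density) simp
  show ?thesis unfolding Phi_def
    by (rule finite_measure_mono) (use assms in auto)
qed

lemma real_distribution_gauss: "v > 0 \<Longrightarrow> real_distribution (gauss v)"
  by (simp add: real_distribution_def real_distribution_axioms_def gauss_def prob_space_normal_density)

lemma isCont_cdf_gauss:
  assumes "v > 0" shows "isCont (cdf (gauss v)) x"
proof -
  interpret real_distribution "gauss v" by (rule real_distribution_gauss[OF assms])
  have "emeasure (gauss v) {x} = 0"
    using assms by (simp add: gauss_def emeasure_density nn_integral_null_set)
  then show ?thesis by (simp add: isCont_cdf measure_def)
qed

lemma weak_conv_m_gauss_zero:
  assumes "\<And>k. prob_space (M k)"
  shows "weak_conv_m (\<lambda>k. distr (M k) borel (\<lambda>_. 0 :: real)) (gauss 0)"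
proof -
  have "distr (M k) borel (\<lambda>_. 0 :: real) = return borel 0" for k
    by (rule prob_space.distr_const[OF assms]) simp
  then show ?thesis by (simp add: gauss_def weak_conv_m_def weak_conv_def)
qed

lemma cdf_distr:
  "f \<in> borel_measurable M \<Longrightarrow> cdf (distr M borel f) x = measure M {s \<in> space M. f s \<le> x}"
  unfolding cdf_def by (subst measure_distr) (auto intro!: arg_cong[where f = "measure M"])

lemma (in prob_space) prob_le_prob_Un:
  assumes "B \<in> events" "C \<in> events" "A \<subseteq> B \<union> C"
  shows "prob A \<le> prob B + prob C"
  using assms finite_measure_mono[of A "B \<union> C"] measure_Un_le[OF assms(1,2)] by auto

definition vanishing_in_prob :: "(nat \<Rightarrow> 'a measure) \<Rightarrow> (nat \<Rightarrow> 'a \<Rightarrow> real) \<Rightarrow> bool" where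
  "vanishing_in_prob M R \<longleftrightarrow>
     (\<forall>e>0. (\<lambda>k. measure (M k) {s \<in> space (M k). e < \<bar>R k s\<bar>}) \<longlonglongrightarrow> 0)"

lemma weak_conv_m_slutsky:
  fixes M :: "nat \<Rightarrow> 'a measure" and f g :: "nat \<Rightarrow> 'a \<Rightarrow> real"
  assumes prob: "\<And>k. prob_space (M k)"
    and f_meas: "\<And>k. f k \<in> borel_measurable (M k)"
    and g_meas: "\<And>k. g k \<in> borel_measurable (M k)"
    and conv: "weak_conv_m (\<lambda>k. distr (M k) borel (f k)) G"
    and cont: "\<And>x. isCont (cdf G) x"
    and vanish: "vanishing_in_prob M (\<lambda>k s. g k s - f k s)"
  shows "weak_conv_m (\<lambda>k. distr (M k) borel (g k)) G"
  unfolding weak_conv_m_def weak_conv_def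
proof (intro allI impI)
  fix x
  note [measurable] = f_meas g_meas
  define F where "F = cdf G"
  define Fk where "Fk k t = measure (M k) {s \<in> space (M k). f k s \<le> t}" for k t
  define Gk where "Gk k = measure (M k) {s \<in> space (M k). g k s \<le> x}" for k
  define p where "p k e = measure (M k) {s \<in> space (M k). e < \<bar>g k s - f k s\<bar>}" for k e
  have Fk_lim: "(\<lambda>k. Fk k t) \<longlonglongrightarrow> F t" for t
    using conv cont[of t] unfolding weak_conv_m_def weak_conv_def Fk_def F_def
    by (simp add: cdf_distr)
  have "(\<lambda>k. Gk k) \<longlonglongrightarrow> F x"
  proof (rule tendstoI)
    fix \<gamma> :: real assume "\<gamma> > 0"
    then obtain d where d: "d > 0" "\<And>y. \<bar>y - x\<bar> < d \<Longrightarrow> \<bar>F y - F x\<bar> < \<gamma>/3"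
      using cont[of x] unfolding F_def continuous_at_eps_delta dist_real_def
      by (metis divide_pos_pos zero_less_numeral)
    define e where "e = d/2"
    have e: "e > 0" "\<bar>F (x + e) - F x\<bar> < \<gamma>/3" "\<bar>F (x - e) - F x\<bar> < \<gamma>/3"
      using d by (auto simp: e_def)
    have "eventually (\<lambda>k. \<bar>Fk k (x + e) - F (x + e)\<bar> < \<gamma>/3) sequentially"
      "eventually (\<lambda>k. \<bar>Fk k (x - e) - F (x - e)\<bar> < \<gamma>/3) sequentially"
      "eventually (\<lambda>k. \<bar>p k e\<bar> < \<gamma>/3) sequentially"
      using Fk_lim[of "x + e"] Fk_lim[of "x - e"] vanish e(1) \<open>\<gamma> > 0\<close>
      unfolding vanishing_in_prob_def p_def
      by (auto dest!: tendstoD[where e = "\<gamma>/3"] simp: dist_real_def)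
    then show "eventually (\<lambda>k. dist (Gk k) (F x) < \<gamma>) sequentially"
    proof eventually_elim
      case (elim k)
      interpret prob_space "M k" by (rule prob)
      have "Gk k \<le> Fk k (x + e) + p k e" "Fk k (x - e) \<le> Gk k + p k e"
        unfolding Gk_def Fk_def p_def by (rule prob_le_prob_Un; auto)+
      then show ?case using elim e unfolding dist_real_def by linarith
    qed
  qed
  then show "(\<lambda>k. cdf (distr (M k) borel (g k)) x) \<longlonglongrightarrow> cdf G x"
    by (simp add: cdf_distr Gk_def F_def)
qed

lemma vanishing_in_prob_sum:
  fixes M :: "nat \<Rightarrow> 'a measure" and R :: "'n::finite \<Rightarrow> nat \<Rightarrow> 'a \<Rightarrow> real"
  assumes prob: "\<And>k. prob_space (M k)"
    and R_meas: "\<And>i k. R i k \<in> borel_measurable (M k)"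
    and vanish: "\<And>i. vanishing_in_prob M (R i)"
  shows "vanishing_in_prob M (\<lambda>k s. \<Sum>i\<in>UNIV. c i * R i k s)"
  unfolding vanishing_in_prob_def
proof (intro allI impI)
  fix e :: real assume "e > 0"
  note [measurable] = R_meas
  define C where "C = (\<Sum>i\<in>UNIV. \<bar>c i\<bar>) + 1"
  have "C > 0" unfolding C_def by (simp add: add_nonneg_pos sum_nonneg)
  define \<eta> where "\<eta> = e / C"
  have "\<eta> > 0" using \<open>e > 0\<close> \<open>C > 0\<close> by (simp add: \<eta>_def)
  have union_bound: "measure (M k) {s \<in> space (M k). e < \<bar>\<Sum>i\<in>UNIV. c i * R i k s\<bar>}
      \<le> (\<Sum>i\<in>UNIV. measure (M k) {s \<in> space (M k). \<eta> < \<bar>R i k s\<bar>})" for k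
  proof -
    interpret prob_space "M k" by (rule prob)
    have "{s \<in> space (M k). e < \<bar>\<Sum>i\<in>UNIV. c i * R i k s\<bar>}
        \<subseteq> (\<Union>i. {s \<in> space (M k). \<eta> < \<bar>R i k s\<bar>})"
    proof (rule subsetI, rule ccontr)
      fix s assume s: "s \<in> {s \<in> space (M k). e < \<bar>\<Sum>i\<in>UNIV. c i * R i k s\<bar>}"
        and "s \<notin> (\<Union>i. {s \<in> space (M k). \<eta> < \<bar>R i k s\<bar>})"
      then have small: "\<bar>R i k s\<bar> \<le> \<eta>" for i by (auto simp: not_less)
      have "\<bar>\<Sum>i\<in>UNIV. c i * R i k s\<bar> \<le> (\<Sum>i\<in>UNIV. \<bar>c i\<bar> * \<eta>)"
        using sum_abs[of "\<lambda>i. c i * R i k s" UNIV]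
          sum_mono[of UNIV "\<lambda>i. \<bar>c i * R i k s\<bar>" "\<lambda>i. \<bar>c i\<bar> * \<eta>"]
        by (simp add: abs_mult mult_left_mono small)
      also have "\<dots> = (C - 1) * \<eta>" by (simp add: C_def sum_distrib_right)
      also have "\<dots> < C * \<eta>" using \<open>\<eta> > 0\<close> by simp
      also have "\<dots> = e" using \<open>C > 0\<close> by (simp add: \<eta>_def)
      finally show False using s by simp
    qed
    then have "measure (M k) {s \<in> space (M k). e < \<bar>\<Sum>i\<in>UNIV. c i * R i k s\<bar>}
        \<le> measure (M k) (\<Union>i. {s \<in> space (M k). \<eta> < \<bar>R i k s\<bar>})"
      by (intro finite_measure_mono) measurable
    also have "\<dots> \<le> (\<Sum>i\<in>UNIV. measure (M k) {s \<in> space (M k). \<eta> < \<bar>R i k s\<bar>})"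
      by (rule measure_UNION_le) auto
    finally show ?thesis .
  qed
  have union_lim: "(\<lambda>k. \<Sum>i\<in>UNIV. measure (M k) {s \<in> space (M k). \<eta> < \<bar>R i k s\<bar>}) \<longlonglongrightarrow> 0"
    using vanish \<open>\<eta> > 0\<close> unfolding vanishing_in_prob_def by (intro tendsto_null_sum) auto
  show "(\<lambda>k. measure (M k) {s \<in> space (M k). e < \<bar>\<Sum>i\<in>UNIV. c i * R i k s\<bar>}) \<longlonglongrightarrow> 0"
    by (rule tendsto_sandwich[OF _ _ tendsto_const union_lim]) (auto intro: always_eventually union_bound)
qed

lemma weak_conv_m_bounded_in_prob:
  fixes M :: "nat \<Rightarrow> 'a measure" and Y :: "nat \<Rightarrow> 'a \<Rightarrow> real"
  assumes prob: "\<And>k. prob_space (M k)"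
    and Y_meas: "\<And>k. Y k \<in> borel_measurable (M k)"
    and conv: "weak_conv_m (\<lambda>k. distr (M k) borel (Y k)) G"
    and G: "real_distribution G" and cont: "\<And>x. isCont (cdf G) x"
    and "\<gamma> > 0"
  obtains B where "B > 0"
    "eventually (\<lambda>k. measure (M k) {s \<in> space (M k). B < \<bar>Y k s\<bar>} < \<gamma>) sequentially"
proof -
  interpret G: real_distribution G by (rule G)
  note [measurable] = Y_meas
  define Fk where "Fk k t = measure (M k) {s \<in> space (M k). Y k s \<le> t}" for k t
  have Fk_lim: "(\<lambda>k. Fk k t) \<longlonglongrightarrow> cdf G t" for t
    using conv cont[of t] unfolding weak_conv_m_def weak_conv_def Fk_def
    by (simp add: cdf_distr)
  have "eventually (\<lambda>t. cdf G t < \<gamma>/2) at_bot" "eventually (\<lambda>t. cdf G t > 1 - \<gamma>/2) at_top"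
    using order_tendstoD(2)[OF G.cdf_lim_at_bot, of "\<gamma>/2"]
      order_tendstoD(1)[OF G.cdf_lim_at_top_prob, of "1 - \<gamma>/2"] \<open>\<gamma> > 0\<close> by auto
  then obtain N1 N2 where N1: "\<And>t. t \<le> N1 \<Longrightarrow> cdf G t < \<gamma>/2"
    and N2: "\<And>t. t \<ge> N2 \<Longrightarrow> cdf G t > 1 - \<gamma>/2"
    unfolding eventually_at_bot_linorder eventually_at_top_linorder by blast
  define B where "B = max 1 (max (- N1) N2)"
  have B: "B > 0" "cdf G (-B) < \<gamma>/2" "cdf G B > 1 - \<gamma>/2"
    using N1[of "-B"] N2[of B] by (auto simp: B_def)
  have "eventually (\<lambda>k. Fk k (-B) < \<gamma>/2) sequentially" "eventually (\<lambda>k. Fk k B > 1 - \<gamma>/2) sequentially"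
    using order_tendstoD(2)[OF Fk_lim, of "-B" "\<gamma>/2"] order_tendstoD(1)[OF Fk_lim, of "1 - \<gamma>/2" B] B
    by auto
  then have "eventually (\<lambda>k. measure (M k) {s \<in> space (M k). B < \<bar>Y k s\<bar>} < \<gamma>) sequentially"
  proof eventually_elim
    case (elim k)
    interpret prob_space "M k" by (rule prob)
    have "measure (M k) {s \<in> space (M k). B < \<bar>Y k s\<bar>}
        \<le> Fk k (-B) + prob (space (M k) - {s \<in> space (M k). Y k s \<le> B})"
      unfolding Fk_def by (rule prob_le_prob_Un) auto
    also have "\<dots> = Fk k (-B) + (1 - Fk k B)"
      unfolding Fk_def by (subst prob_compl) auto
    finally show ?case using elim by linarith
  qed
  with B(1) show thesis by (rule that)
qed

lemma delta_method_remainder_vanishing: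
  fixes M :: "nat \<Rightarrow> 'a measure" and X :: "nat \<Rightarrow> 'a \<Rightarrow> real"
  assumes prob: "\<And>k. prob_space (M k)"
    and X_meas: "\<And>k. X k \<in> borel_measurable (M k)"
    and conv: "weak_conv_m (\<lambda>k. distr (M k) borel (\<lambda>s. sqrt (real k) * (X k s - z))) G"
    and G: "real_distribution G" and cont: "\<And>x. isCont (cdf G) x"
    and deriv: "(nu has_real_derivative d) (at z)"
  shows "vanishing_in_prob M (\<lambda>k s. sqrt (real k) * (nu (X k s) - nu z - d * (X k s - z)))"
  unfolding vanishing_in_prob_def
proof (intro allI impI tendstoI)
  fix \<eta> \<gamma> :: real assume "\<eta> > 0" "\<gamma> > 0"
  note [measurable] = X_meas
  have "(\<lambda>s. sqrt (real k) * (X k s - z)) \<in> borel_measurable (M k)" for k by measurable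
  then obtain B where "B > 0" and bounded:
    "eventually (\<lambda>k. measure (M k) {s \<in> space (M k). B < \<bar>sqrt (real k) * (X k s - z)\<bar>} < \<gamma>) sequentially"
    using weak_conv_m_bounded_in_prob[OF prob _ conv G cont \<open>\<gamma> > 0\<close>] by blast
  define \<theta> where "\<theta> = \<eta> / (2 * B)"
  have "\<theta> > 0" using \<open>\<eta> > 0\<close> \<open>B > 0\<close> by (simp add: \<theta>_def)
  then obtain \<delta> where "\<delta> > 0" and taylor:
    "\<And>y. \<bar>y - z\<bar> < \<delta> \<Longrightarrow> \<bar>nu y - nu z - d * (y - z)\<bar> \<le> \<theta> * \<bar>y - z\<bar>"
    using deriv unfolding has_field_derivative_def has_derivative_at_alt by (auto simp: mult.commute)
  have "eventually (\<lambda>k. sqrt (real k) > B / \<delta>) sequentially"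
    using filterlim_compose[OF sqrt_at_top filterlim_real_sequentially]
    by (simp add: filterlim_at_top_dense)
  with bounded show "eventually (\<lambda>k. dist (measure (M k)
      {s \<in> space (M k). \<eta> < \<bar>sqrt (real k) * (nu (X k s) - nu z - d * (X k s - z))\<bar>}) 0 < \<gamma>) sequentially"
  proof eventually_elim
    case (elim k)
    define q where "q = sqrt (real k)"
    have "B < \<delta> * q" using elim(2) \<open>\<delta> > 0\<close> by (simp add: q_def field_simps)
    then have "q > 0" using \<open>B > 0\<close> \<open>\<delta> > 0\<close> by (meson less_trans zero_less_mult_pos)
    have "{s \<in> space (M k). \<eta> < \<bar>q * (nu (X k s) - nu z - d * (X k s - z))\<bar>}
        \<subseteq> {s \<in> space (M k). B < \<bar>q * (X k s - z)\<bar>}"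
    proof (rule subsetI, rule ccontr)
      fix s assume s: "s \<in> {s \<in> space (M k). \<eta> < \<bar>q * (nu (X k s) - nu z - d * (X k s - z))\<bar>}"
        and "s \<notin> {s \<in> space (M k). B < \<bar>q * (X k s - z)\<bar>}"
      then have qu: "q * \<bar>X k s - z\<bar> \<le> B" using \<open>q > 0\<close> by (auto simp: abs_mult)
      with \<open>B < \<delta> * q\<close> \<open>q > 0\<close> have "\<bar>X k s - z\<bar> < \<delta>"
        by (metis mult.commute mult_less_cancel_left_pos order_le_less_trans)
      then have "q * \<bar>nu (X k s) - nu z - d * (X k s - z)\<bar> \<le> q * (\<theta> * \<bar>X k s - z\<bar>)"
        using taylor \<open>q > 0\<close> by (simp add: mult_left_mono)
      also have "\<dots> \<le> \<theta> * B" using qu \<open>\<theta> > 0\<close> by (simp add: mult_left_mono mult.left_commute)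
      also have "\<dots> < \<eta>" using \<open>B > 0\<close> \<open>\<eta> > 0\<close> by (simp add: \<theta>_def)
      finally show False using s \<open>q > 0\<close> by (simp add: abs_mult)
    qed
    then have "measure (M k) {s \<in> space (M k). \<eta> < \<bar>q * (nu (X k s) - nu z - d * (X k s - z))\<bar>}
        \<le> measure (M k) {s \<in> space (M k). B < \<bar>q * (X k s - z)\<bar>}"
      using prob_space.finite_measure[OF prob] by (intro finite_measure.finite_measure_mono) auto
    then show ?case using elim(1) by (simp add: q_def)
  qed
qed

lemma quadratic_form_diagonal:
  fixes a v :: "'n::finite \<Rightarrow> real"
  shows "(\<Sum>i\<in>UNIV. \<Sum>j\<in>UNIV. a i * a j * (if i = j then v i else 0)) = (\<Sum>i\<in>UNIV. (a i)\<^sup>2 * v i)"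
  by (simp add: if_distrib power2_eq_square cong: if_cong)

lemma asym_normal_marginal:
  assumes "asym_normal As L mu V" "admissible As A"
  shows "weak_conv_m (\<lambda>k. distr (L A k) borel (\<lambda>s. sqrt (real k) * (s i - mu A i))) (gauss (V A i i))"
proof -
  have "weak_conv_m
      (\<lambda>k. distr (L A k) borel (\<lambda>s. sqrt (real k) * (\<Sum>j\<in>UNIV. (if j = i then 1 else 0) * (s j - mu A j))))
      (gauss (\<Sum>a\<in>UNIV. \<Sum>b\<in>UNIV. (if a = i then 1 else 0) * (if b = i then 1 else 0) * V A a b))"
    using assms(1)[unfolded asym_normal_def, rule_format, OF assms(2), of "\<lambda>j. if j = i then 1 else 0"] .
  then show ?thesis by (simp add: of_bool_def[symmetric] mult.assoc flip: sum_distrib_left)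
qed

lemma asym_normal_cong:
  assumes "asym_normal As L mu V"
    and "\<And>A. admissible As A \<Longrightarrow> mu' A = mu A" "\<And>A. admissible As A \<Longrightarrow> V' A = V A"
  shows "asym_normal As L mu' V'"
  using assms unfolding asym_normal_def by simp

lemma asym_normal_delta_method:
  fixes As :: "'n::finite \<Rightarrow> real set" and L :: "('n \<Rightarrow> real) \<Rightarrow> nat \<Rightarrow> ('n \<Rightarrow> real) measure"
    and mu d sigma2 :: "('n \<Rightarrow> real) \<Rightarrow> 'n \<Rightarrow> real" and nu :: "real \<Rightarrow> real"
  assumes L_prob: "\<And>A k. prob_space (L A k)"
    and L_sets: "\<And>A k. sets (L A k) = sets (Pi\<^sub>M UNIV (\<lambda>_. borel))"
    and asym: "asym_normal As L mu (\<lambda>A i j. if i = j then sigma2 A i else 0)"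
    and nu_meas: "nu \<in> borel_measurable borel"
    and deriv: "\<And>A i. admissible As A \<Longrightarrow> (nu has_real_derivative d A i) (at (mu A i))"
    and nondegenerate: "\<And>A i. admissible As A \<Longrightarrow> (d A i)\<^sup>2 * sigma2 A i > 0"
  shows "asym_normal As (transform_design nu L) (\<lambda>A i. nu (mu A i))
    (\<lambda>A i j. if i = j then (d A i)\<^sup>2 * sigma2 A i else 0)"
  unfolding asym_normal_def
proof (intro allI impI)
  fix A and c :: "'n \<Rightarrow> real"
  assume adm: "admissible As A"
  have coord [measurable]: "(\<lambda>s. s i) \<in> borel_measurable (L A k)" for i k
    unfolding measurable_cong_sets[OF L_sets refl] by measurable
  note [measurable] = nu_meas
  have sigma2_pos: "sigma2 A i > 0" for i
    using nondegenerate[OF adm, of i] by (simp add: zero_less_mult_iff)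
  define g where "g k s = sqrt (real k) * (\<Sum>i\<in>UNIV. c i * (nu (s i) - nu (mu A i)))" for k s
  have g_meas: "g k \<in> borel_measurable (L A k)" for k unfolding g_def by measurable
  have transform: "distr (transform_design nu L A k) borel
      (\<lambda>s. sqrt (real k) * (\<Sum>i\<in>UNIV. c i * (s i - nu (mu A i)))) = distr (L A k) borel (g k)" for k
    unfolding transform_design_def g_def
    by (subst distr_distr) (auto intro!: measurable_PiM_single' simp: comp_def)
  define v where "v = (\<Sum>i\<in>UNIV. (c i)\<^sup>2 * ((d A i)\<^sup>2 * sigma2 A i))"
  have "weak_conv_m (\<lambda>k. distr (L A k) borel (g k)) (gauss v)"
  proof (cases "c = (\<lambda>_. 0)")
    case True
    then have "g k = (\<lambda>_. 0)" for k by (simp add: g_def fun_eq_iff)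
    with True show ?thesis by (simp add: v_def weak_conv_m_gauss_zero[OF L_prob])
  next
    case False
    then obtain j where "c j \<noteq> 0" by auto
    then have "0 < (c j)\<^sup>2 * ((d A j)\<^sup>2 * sigma2 A j)" using nondegenerate[OF adm] by simp
    also have "\<dots> \<le> v" unfolding v_def
      using nondegenerate[OF adm] by (intro member_le_sum mult_nonneg_nonneg) (auto simp: less_imp_le sigma2_pos)
    finally have "v > 0" .
    define f where "f k s = sqrt (real k) * (\<Sum>i\<in>UNIV. (c i * d A i) * (s i - mu A i))" for k s
    define R where "R i k s = sqrt (real k) * (nu (s i) - nu (mu A i) - d A i * (s i - mu A i))" for i k s
    have f_meas: "f k \<in> borel_measurable (L A k)" for k unfolding f_def by measurable
    have R_meas: "R i k \<in> borel_measurable (L A k)" for i k unfolding R_def by measurable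
    have f_conv: "weak_conv_m (\<lambda>k. distr (L A k) borel (f k)) (gauss v)"
      using asym[unfolded asym_normal_def, rule_format, OF adm, of "\<lambda>i. c i * d A i"]
      unfolding f_def v_def quadratic_form_diagonal by (simp add: power_mult_distrib mult_ac)
    have R_vanish: "vanishing_in_prob (L A) (R i)" for i
      unfolding R_def
      by (rule delta_method_remainder_vanishing[OF L_prob coord
            asym_normal_marginal[OF asym adm, of i] _ _ deriv[OF adm]])
        (simp_all add: real_distribution_gauss isCont_cdf_gauss sigma2_pos)
    have "g k s - f k s = (\<Sum>i\<in>UNIV. c i * R i k s)" for k s
      unfolding f_def g_def R_def
      by (simp add: sum_distrib_left sum_subtractf[symmetric] algebra_simps)
    then have "vanishing_in_prob (L A) (\<lambda>k s. g k s - f k s)"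
      using vanishing_in_prob_sum[OF L_prob R_meas R_vanish] by simp
    then show ?thesis
      by (rule weak_conv_m_slutsky[OF L_prob f_meas g_meas f_conv isCont_cdf_gauss[OF \<open>v > 0\<close>]])
  qed
  then show "weak_conv_m
      (\<lambda>k. distr (transform_design nu L A k) borel (\<lambda>s. sqrt (real k) * (\<Sum>i\<in>UNIV. c i * (s i - nu (mu A i)))))
      (gauss (\<Sum>i\<in>UNIV. \<Sum>j\<in>UNIV. c i * c j * (if i = j then (d A i)\<^sup>2 * sigma2 A i else 0)))"
    unfolding transform quadratic_form_diagonal v_def .
qed

lemma design_IC_if_identity_variance:
  fixes As :: "'n::finite \<Rightarrow> real set" and f chi :: "real \<Rightarrow> real"
  assumes asym: "asym_normal As L (\<lambda>A i. f (A i)) (\<lambda>A i j. if i = j then 1 else 0)"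
    and f_mono: "\<And>i a b. a \<in> As i \<Longrightarrow> b \<in> As i \<Longrightarrow> chi a \<le> chi b \<Longrightarrow> f a \<le> f b"
  shows "design_IC As chi L"
  unfolding design_IC_def
proof (intro exI conjI allI impI ballI)
  fix k :: nat and i j :: 'n and A :: "'n \<Rightarrow> real" and a\<^sub>0 \<alpha>
  assume "i \<noteq> j" "natural_action As chi i a\<^sub>0" "\<alpha> \<in> As i"
  then have "f \<alpha> \<le> f a\<^sub>0" using f_mono unfolding natural_action_def by blast
  then have "sqrt (real k) * (f \<alpha> - f (A j)) / sqrt 2 \<le> sqrt (real k) * (f a\<^sub>0 - f (A j)) / sqrt 2"
    by (intro divide_right_mono mult_left_mono) auto
  with \<open>i \<noteq> j\<close> show "approx_win k (\<lambda>l. f ((A(i := \<alpha>)) l)) (\<lambda>l m. if l = m then 1 else 0) i j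
      \<le> approx_win k (\<lambda>l. f ((A(i := a\<^sub>0)) l)) (\<lambda>l m. if l = m then 1 else 0) i j"
    unfolding approx_win_def by (simp add: Phi_mono)
qed (rule asym)

lemma convex_on_above_tangent_left:
  fixes f :: "real \<Rightarrow> real"
  assumes convex: "convex_on {c..x} f" and "c < x"
    and deriv: "(f has_real_derivative f') (at c)"
  shows "f' * (x - c) \<le> f x - f c"
proof -
  have "((\<lambda>y. (f y - f c) / (y - c)) \<longlongrightarrow> f') (at_right c)"
    using deriv unfolding has_field_derivative_iff
    by (rule tendsto_mono[rotated]) (simp add: at_le)
  moreover have "eventually (\<lambda>y. (f y - f c) / (y - c) \<le> (f x - f c) / (x - c)) (at_right c)"
    using eventually_at_right_real[OF \<open>c < x\<close>]
  proof eventually_elim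
    fix y assume y: "y \<in> {c<..<x}"
    have "f y \<le> (f x - f c) / (x - c) * (y - c) + f c"
      using convex_onD_Icc'[OF convex, of y] y by auto
    then have "f y - f c \<le> (f x - f c) / (x - c) * (y - c)" by simp
    with y show "(f y - f c) / (y - c) \<le> (f x - f c) / (x - c)"
      by (simp add: divide_simps mult.commute)
  qed
  ultimately have "f' \<le> (f x - f c) / (x - c)"
    by (rule tendsto_upperbound) (simp add: trivial_limit_at_right_real)
  with \<open>c < x\<close> show ?thesis by (simp add: field_simps)
qed

text \<open>Midpoint half of the Hermite--Hadamard inequality: with \<open>m\<close> the midpoint,
  \<open>t \<mapsto> F (m + t) - F (m - t) - 2 t g m\<close> has derivative \<open>g (m + t) + g (m - t) - 2 g m \<ge> 0\<close>.\<close>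
lemma midpoint_derivative_le_secant:
  fixes F g :: "real \<Rightarrow> real"
  assumes "y \<le> x"
    and deriv: "\<And>z. z \<in> {y..x} \<Longrightarrow> (F has_real_derivative g z) (at z)"
    and convex: "convex_on {y..x} g"
  shows "(x - y) * g ((x + y) / 2) \<le> F x - F y"
proof -
  define m where "m = (x + y) / 2"
  define h where "h = (x - y) / 2"
  define H where "H t = F (m + t) - F (m - t) - 2 * t * g m" for t
  have in_Icc: "m + t \<in> {y..x}" "m - t \<in> {y..x}" if "0 \<le> t" "t \<le> h" for t
    using that by (auto simp: m_def h_def field_simps)
  have "H 0 \<le> H h"
  proof (rule DERIV_nonneg_imp_nondecreasing[of 0 h H])
    show "0 \<le> h" using \<open>y \<le> x\<close> by (simp add: h_def)
  next
    fix t assume t: "0 \<le> t" "t \<le> h"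
    have "(H has_real_derivative g (m + t) + g (m - t) - 2 * g m) (at t)"
      unfolding H_def
      by (auto intro!: derivative_eq_intros DERIV_chain2[OF deriv] in_Icc[OF t])
    moreover have "g m \<le> (1 - 1/2) * g (m + t) + (1/2) * g (m - t)"
      using convex_onD[OF convex, of "1/2" "m + t" "m - t"] in_Icc[OF t]
      by (simp add: field_simps)
    ultimately show "\<exists>D. (H has_real_derivative D) (at t) \<and> 0 \<le> D" by auto
  qed
  moreover have "m + h = x" "m - h = y" by (simp_all add: m_def h_def field_simps)
  ultimately show ?thesis by (simp add: H_def m_def h_def field_simps)
qed

lemma gap_over_pooled_sd_le_diff:
  fixes nu s :: "real \<Rightarrow> real"
  assumes "y \<le> x"
    and deriv: "\<And>z. z \<in> {y..x} \<Longrightarrow> (nu has_real_derivative 1 / sqrt (s z)) (at z)"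
    and s_pos: "\<And>z. z \<in> {y..x} \<Longrightarrow> s z > 0"
    and s_mono: "s y \<le> s x"
    and convexity: "convex_on {y..x} nu \<or> (convex_on {y..x} (\<lambda>z. 1 / sqrt (s z)) \<and> convex_on {y..x} s)"
  shows "(x - y) / sqrt ((s x + s y) / 2) \<le> nu x - nu y"
proof (cases "y = x")
  case False
  with \<open>y \<le> x\<close> have "y < x" by simp
  have "s x > 0" "s y > 0" using s_pos \<open>y \<le> x\<close> by auto
  from convexity show ?thesis
  proof
    assume convex: "convex_on {y..x} nu"
    have "(x - y) / sqrt ((s x + s y) / 2) \<le> (x - y) / sqrt (s y)"
      using s_mono \<open>s y > 0\<close> \<open>y < x\<close> by (intro divide_left_mono) auto
    also have "\<dots> \<le> nu x - nu y"
      using convex_on_above_tangent_left[OF convex \<open>y < x\<close> deriv] \<open>y \<le> x\<close> by simp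
    finally show ?thesis .
  next
    assume "convex_on {y..x} (\<lambda>z. 1 / sqrt (s z)) \<and> convex_on {y..x} s"
    then have inv_sqrt_convex: "convex_on {y..x} (\<lambda>z. 1 / sqrt (s z))" and s_convex: "convex_on {y..x} s"
      by auto
    define m where "m = (x + y) / 2"
    have "m \<in> {y..x}" using \<open>y \<le> x\<close> by (simp add: m_def)
    have "s m \<le> (1 - 1/2) * s x + 1/2 * s y"
      using convex_onD[OF s_convex, of "1/2" x y] \<open>y \<le> x\<close> by (simp add: m_def field_simps)
    then have "(x - y) / sqrt ((s x + s y) / 2) \<le> (x - y) * (1 / sqrt (s m))"
      using s_pos[OF \<open>m \<in> {y..x}\<close>] \<open>y < x\<close> by (simp add: divide_left_mono)
    also have "\<dots> \<le> nu x - nu y"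
      using midpoint_derivative_le_secant[OF \<open>y \<le> x\<close> deriv inv_sqrt_convex] by (simp add: m_def)
    finally show ?thesis .
  qed
qed simp

lemma gap_over_pooled_sd_le_nu_chi_diff:
  fixes chi sigma2 nu :: "real \<Rightarrow> real" and Acts :: "real set"
  assumes chi_inj: "inj_on chi Acts"
    and sigma2_pos: "\<And>a. a \<in> Acts \<Longrightarrow> sigma2 a > 0"
    and sigma2_mono: "\<And>a a'. a \<in> Acts \<Longrightarrow> a' \<in> Acts \<Longrightarrow> chi a \<le> chi a' \<Longrightarrow> sigma2 a \<le> sigma2 a'"
    and interval: "is_interval (chi ` Acts)"
    and nu_deriv: "\<And>z. z \<in> chi ` Acts \<Longrightarrow>
      (nu has_real_derivative 1 / sqrt (sigma2 (the_inv_into Acts chi z))) (at z)"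
    and convexity: "convex_on (chi ` Acts) nu \<or>
      (convex_on (chi ` Acts) (\<lambda>z. 1 / sqrt (sigma2 (the_inv_into Acts chi z))) \<and>
       convex_on (chi ` Acts) (\<lambda>z. sigma2 (the_inv_into Acts chi z)))"
    and "a \<in> Acts" "b \<in> Acts" "chi b \<le> chi a"
  shows "(chi a - chi b) / sqrt ((sigma2 a + sigma2 b) / 2) \<le> nu (chi a) - nu (chi b)"
proof -
  have inv_chi: "the_inv_into Acts chi (chi a) = a" if "a \<in> Acts" for a
    by (rule the_inv_into_f_f[OF chi_inj that])
  have inv_in: "the_inv_into Acts chi z \<in> Acts" if "z \<in> chi ` Acts" for z
    by (rule the_inv_into_into[OF chi_inj that subset_refl])
  have "chi a \<in> chi ` Acts" "chi b \<in> chi ` Acts" using assms(7,8) by auto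
  then have sub: "{chi b..chi a} \<subseteq> chi ` Acts"
    using interval unfolding is_interval_1 by (meson atLeastAtMost_iff subsetI)
  have "(chi a - chi b) / sqrt ((sigma2 (the_inv_into Acts chi (chi a)) +
      sigma2 (the_inv_into Acts chi (chi b))) / 2) \<le> nu (chi a) - nu (chi b)"
  proof (rule gap_over_pooled_sd_le_diff)
    fix z assume "z \<in> {chi b..chi a}"
    with sub have "z \<in> chi ` Acts" by blast
    then show "(nu has_real_derivative 1 / sqrt (sigma2 (the_inv_into Acts chi z))) (at z)"
      "sigma2 (the_inv_into Acts chi z) > 0"
      by (simp_all add: nu_deriv sigma2_pos inv_in)
  next
    show "sigma2 (the_inv_into Acts chi (chi b)) \<le> sigma2 (the_inv_into Acts chi (chi a))"
      using assms(7-9) by (simp add: inv_chi sigma2_mono)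
  next
    show "convex_on {chi b..chi a} nu \<or>
      (convex_on {chi b..chi a} (\<lambda>z. 1 / sqrt (sigma2 (the_inv_into Acts chi z))) \<and>
       convex_on {chi b..chi a} (\<lambda>z. sigma2 (the_inv_into Acts chi z)))"
      using convexity convex_on_subset[OF _ sub] by blast
  qed (rule assms(9))
  then show ?thesis using assms(7,8) by (simp add: inv_chi)
qed

lemma asym_normal_variance_stabilized:
  fixes As :: "'n::finite \<Rightarrow> real set" and chi sigma2 nu :: "real \<Rightarrow> real"
    and L :: "('n \<Rightarrow> real) \<Rightarrow> nat \<Rightarrow> ('n \<Rightarrow> real) measure"
  assumes L_prob: "\<And>A k. prob_space (L A k)"
    and L_sets: "\<And>A k. sets (L A k) = sets (Pi\<^sub>M UNIV (\<lambda>_. borel))"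
    and asym: "asym_normal As L (\<lambda>A i. chi (A i)) (\<lambda>A i j. if i = j then sigma2 (A i) else 0)"
    and nu_meas: "nu \<in> borel_measurable borel"
    and sigma2_pos: "\<And>i a. a \<in> As i \<Longrightarrow> sigma2 a > 0"
    and nu_deriv: "\<And>i a. a \<in> As i \<Longrightarrow> (nu has_real_derivative 1 / sqrt (sigma2 a)) (at (chi a))"
  shows "asym_normal As (transform_design nu L) (\<lambda>A i. nu (chi (A i))) (\<lambda>A i j. if i = j then 1 else 0)"
proof -
  have unit_variance: "(1 / sqrt (sigma2 (A i)))\<^sup>2 * sigma2 (A i) = 1" if "admissible As A" for A i
    using sigma2_pos[of "A i" i] that by (simp add: admissible_def power_divide)
  have deriv: "(nu has_real_derivative 1 / sqrt (sigma2 (A i))) (at (chi (A i)))"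
    if "admissible As A" for A i
    using nu_deriv[of "A i" i] that by (simp add: admissible_def)
  have "asym_normal As (transform_design nu L) (\<lambda>A i. nu (chi (A i)))
      (\<lambda>A i j. if i = j then (1 / sqrt (sigma2 (A i)))\<^sup>2 * sigma2 (A i) else 0)"
    by (rule asym_normal_delta_method[OF L_prob L_sets asym nu_meas])
      (simp_all add: deriv unit_variance)
  then show ?thesis
    by (rule asym_normal_cong) (simp_all add: fun_eq_iff unit_variance)
qed

lemma Phi_scaled_gap_le:
  assumes "(x - y) / sqrt ((u + v) / 2) \<le> D"
  shows "Phi (sqrt (real k) * (x - y) / sqrt (u + v)) \<le> Phi (sqrt (real k / 2) * D)"
proof (rule Phi_mono)
  have "sqrt (real k) * (x - y) / sqrt (u + v) = sqrt (real k / 2) * ((x - y) / sqrt ((u + v) / 2))"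
    by (simp add: real_sqrt_divide)
  also have "\<dots> \<le> sqrt (real k / 2) * D"
    by (rule mult_left_mono[OF assms]) simp
  finally show "sqrt (real k) * (x - y) / sqrt (u + v) \<le> sqrt (real k / 2) * D" .
qed

theorem theorem3:
  fixes As :: "'n::finite \<Rightarrow> real set"
    and chi sigma2 nu :: "real \<Rightarrow> real"
    and L :: "('n \<Rightarrow> real) \<Rightarrow> nat \<Rightarrow> ('n \<Rightarrow> real) measure"
  defines "Acts \<equiv> (\<Union>i. As i)"
  defines "I \<equiv> chi ` Acts"
  defines "chi_inv \<equiv> the_inv_into Acts chi"
  assumes compact: "\<And>i. compact (As i)"
    and nonempty: "\<And>i. As i \<noteq> {}"
    and chi_cont: "continuous_on Acts chi"
    and chi_inj: "inj_on chi Acts"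
    and sigma2_pos: "\<And>a. a \<in> Acts \<Longrightarrow> sigma2 a > 0"
    and sigma2_mono: "\<And>a a'. a \<in> Acts \<Longrightarrow> a' \<in> Acts \<Longrightarrow> chi a \<le> chi a' \<Longrightarrow> sigma2 a \<le> sigma2 a'"
    and I_interval: "is_interval I"
    and L_prob: "\<And>A k. prob_space (L A k)"
    and L_sets: "\<And>A k. sets (L A k) = sets (Pi\<^sub>M UNIV (\<lambda>_. borel))"
    and asym: "asym_normal As L (\<lambda>A i. chi (A i)) (\<lambda>A i j. if i = j then sigma2 (A i) else 0)"
    and IC: "design_IC As chi L"
    and nu_meas: "nu \<in> borel_measurable borel"
    and nu_deriv: "\<And>z. z \<in> I \<Longrightarrow> (nu has_real_derivative 1 / sqrt (sigma2 (chi_inv z))) (at z)"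
    and convexity: "convex_on I nu \<or>
       (convex_on I (\<lambda>z. 1 / sqrt (sigma2 (chi_inv z))) \<and> convex_on I (\<lambda>z. sigma2 (chi_inv z)))"
  shows "design_IC As chi (transform_design nu L) \<and>
    (\<forall>k::nat. k > 0 \<longrightarrow> (\<forall>a b. a \<in> Acts \<longrightarrow> b \<in> Acts \<longrightarrow> chi a \<ge> chi b \<longrightarrow>
       Phi (sqrt (real k / 2) * (nu (chi a) - nu (chi b)))
         \<ge> Phi (sqrt (real k) * (chi a - chi b) / sqrt (sigma2 a + sigma2 b))))"
proof -
  have gap: "(chi a - chi b) / sqrt ((sigma2 a + sigma2 b) / 2) \<le> nu (chi a) - nu (chi b)"
    if "a \<in> Acts" "b \<in> Acts" "chi b \<le> chi a" for a b
    using gap_over_pooled_sd_le_nu_chi_diff[OF chi_inj sigma2_pos sigma2_mono I_interval[unfolded I_def]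
        nu_deriv[unfolded I_def chi_inv_def] convexity[unfolded I_def chi_inv_def] that] .
  have "asym_normal As (transform_design nu L) (\<lambda>A i. nu (chi (A i))) (\<lambda>A i j. if i = j then 1 else 0)"
  proof (rule asym_normal_variance_stabilized[OF L_prob L_sets asym nu_meas])
    fix i a assume "a \<in> As i"
    then have "a \<in> Acts" by (auto simp: Acts_def)
    then show "sigma2 a > 0" "(nu has_real_derivative 1 / sqrt (sigma2 a)) (at (chi a))"
      using sigma2_pos nu_deriv[of "chi a"] the_inv_into_f_f[OF chi_inj] by (simp_all add: I_def chi_inv_def)
  qed
  then have "design_IC As chi (transform_design nu L)"
  proof (rule design_IC_if_identity_variance[where f = "\<lambda>a. nu (chi a)"])
    fix i a b assume "a \<in> As i" "b \<in> As i" "chi a \<le> chi b"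
    then have "a \<in> Acts" "b \<in> Acts" by (auto simp: Acts_def)
    have "0 \<le> (chi b - chi a) / sqrt ((sigma2 b + sigma2 a) / 2)"
      using \<open>chi a \<le> chi b\<close> sigma2_pos[OF \<open>a \<in> Acts\<close>] sigma2_pos[OF \<open>b \<in> Acts\<close>] by simp
    also have "\<dots> \<le> nu (chi b) - nu (chi a)" by (rule gap) fact+
    finally show "nu (chi a) \<le> nu (chi b)" by simp
  qed
  with gap Phi_scaled_gap_le show ?thesis by auto
qed

end
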